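(* Let $G$ be a graph and let $A$ and $B$ be two disjoint sets of vertices of $G$ with $|A|=|B|=t$, such that the vertices of $A$ are pairwise adjacent, the vertices of $B$ are pairwise adjacent, and for any two distinct vertices $w,z$ both in $A$ or both in $B$ we have $d(w,y)=d(z,y)$ for all $y\in V(G)\setminus\{w,z\}$. Then $rvcl(G)\geq t+1$.
   Context: All graphs are finite, simple, connected and undirected; $d$ denotes graph distance. For a graph $G$ and $k\in\mathbb{N}$, a rainbow vertex $k$-coloring of $G$ is a map $c:V(G)\to\{1,\dots,k\}$ such that every two vertices $u,v$ are joined by a path whose internal vertices all receive distinct colors. For such a coloring let $R_i=c^{-1}(i)$ and $\Pi=(R_1,\dots,R_k)$; the rainbow code of $v$ is $rc_\Pi(v)=(d(v,R_1),\dots,d(v,R_k))$ where $d(v,R_i)=\min_{x\in R_i}d(v,x)$. A rainbow vertex $k$-coloring is a locating rainbow $k$-coloring if distinct vertices have distinct rainbow codes. The locating rainbow connection number $rvcl(G)$ is the least $k$ for which $G$ has a locating rainbow $k$-coloring. *)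

theory Defs
  imports Main
begin

definition simple_graph :: "'a set \<Rightarrow> ('a \<Rightarrow> 'a \<Rightarrow> bool) \<Rightarrow> bool" where
  "simple_graph V E \<longleftrightarrow> finite V \<and> V \<noteq> {} \<and>
     (\<forall>x y. E x y \<longrightarrow> x \<in> V \<and> y \<in> V) \<and>
     (\<forall>x y. E x y \<longrightarrow> E y x) \<and> (\<forall>x. \<not> E x x)"

definition walk :: "'a set \<Rightarrow> ('a \<Rightarrow> 'a \<Rightarrow> bool) \<Rightarrow> 'a list \<Rightarrow> bool" where
  "walk V E p \<longleftrightarrow> p \<noteq> [] \<and> set p \<subseteq> V \<and>
     (\<forall>i. Suc i < length p \<longrightarrow> E (p ! i) (p ! Suc i))"

definition gpath :: "'a set \<Rightarrow> ('a \<Rightarrow> 'a \<Rightarrow> bool) \<Rightarrow> 'a list \<Rightarrow> bool" where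
  "gpath V E p \<longleftrightarrow> walk V E p \<and> distinct p"

definition connected_graph :: "'a set \<Rightarrow> ('a \<Rightarrow> 'a \<Rightarrow> bool) \<Rightarrow> bool" where
  "connected_graph V E \<longleftrightarrow>
     (\<forall>u\<in>V. \<forall>v\<in>V. \<exists>p. gpath V E p \<and> hd p = u \<and> last p = v)"

definition gdist :: "'a set \<Rightarrow> ('a \<Rightarrow> 'a \<Rightarrow> bool) \<Rightarrow> 'a \<Rightarrow> 'a \<Rightarrow> nat" where
  "gdist V E u v = (LEAST n. \<exists>p. walk V E p \<and> hd p = u \<and> last p = v \<and> length p = Suc n)"

definition gdist_set :: "'a set \<Rightarrow> ('a \<Rightarrow> 'a \<Rightarrow> bool) \<Rightarrow> 'a \<Rightarrow> 'a set \<Rightarrow> nat" where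
  "gdist_set V E v R = Min ((\<lambda>x. gdist V E v x) ` R)"

text \<open>Rainbow vertex k-coloring: c maps V onto {1..k} (the colour classes
  R_1..R_k form a partition of V), and any two vertices are joined by a path
  whose internal vertices receive pairwise distinct colours.\<close>
definition rainbow_vertex_coloring ::
  "'a set \<Rightarrow> ('a \<Rightarrow> 'a \<Rightarrow> bool) \<Rightarrow> ('a \<Rightarrow> nat) \<Rightarrow> nat \<Rightarrow> bool" where
  "rainbow_vertex_coloring V E c k \<longleftrightarrow> c ` V = {1..k} \<and>
     (\<forall>u\<in>V. \<forall>v\<in>V. \<exists>p. gpath V E p \<and> hd p = u \<and> last p = v \<and>
        inj_on c (set (butlast (tl p))))"

definition color_class :: "'a set \<Rightarrow> ('a \<Rightarrow> nat) \<Rightarrow> nat \<Rightarrow> 'a set" where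
  "color_class V c i = {x \<in> V. c x = i}"

definition rainbow_code ::
  "'a set \<Rightarrow> ('a \<Rightarrow> 'a \<Rightarrow> bool) \<Rightarrow> ('a \<Rightarrow> nat) \<Rightarrow> nat \<Rightarrow> 'a \<Rightarrow> nat list" where
  "rainbow_code V E c k v = map (\<lambda>i. gdist_set V E v (color_class V c i)) [1..<Suc k]"

definition locating_rainbow_coloring ::
  "'a set \<Rightarrow> ('a \<Rightarrow> 'a \<Rightarrow> bool) \<Rightarrow> ('a \<Rightarrow> nat) \<Rightarrow> nat \<Rightarrow> bool" where
  "locating_rainbow_coloring V E c k \<longleftrightarrow>
     rainbow_vertex_coloring V E c k \<and> inj_on (rainbow_code V E c k) V"

definition rvcl :: "'a set \<Rightarrow> ('a \<Rightarrow> 'a \<Rightarrow> bool) \<Rightarrow> nat" where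
  "rvcl V E = (LEAST k. \<exists>c. locating_rainbow_coloring V E c k)"

end

theory Submission
  imports Defs
begin

text \<open>Two twins of the same colour have the same rainbow code, so in a locating rainbow
  \<open>k\<close>-colouring the colouring is injective on each of the twin sets \<open>A\<close> and \<open>B\<close>; hence
  \<open>k \<ge> t\<close>. If \<open>k = t\<close>, each of the cliques \<open>A\<close> and \<open>B\<close> meets every colour class, and then
  the code of a clique vertex \<open>x\<close> is \<open>0\<close> at the colour of \<open>x\<close> and \<open>1\<close> everywhere else.
  Vertices \<open>a \<in> A\<close> and \<open>b \<in> B\<close> of the same colour would therefore share their code.\<close>

definition twins :: "'a set \<Rightarrow> ('a \<Rightarrow> 'a \<Rightarrow> bool) \<Rightarrow> 'a \<Rightarrow> 'a \<Rightarrow> bool" where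
  "twins V E w z \<longleftrightarrow> (\<forall>y\<in>V - {w, z}. gdist V E w y = gdist V E z y)"

lemma gdist_self:
  assumes "u \<in> V"
  shows "gdist V E u u = 0"
proof -
  have "walk V E [u]" using assms by (simp add: walk_def)
  then show ?thesis unfolding gdist_def by (intro Least_eq_0) (rule exI[of _ "[u]"], simp)
qed

lemma gdist_pos:
  assumes "connected_graph V E" "u \<in> V" "v \<in> V" "u \<noteq> v"
  shows "0 < gdist V E u v"
proof (rule ccontr)
  assume "\<not> 0 < gdist V E u v"
  then have zero: "gdist V E u v = 0" by simp
  obtain p where p: "gpath V E p" "hd p = u" "last p = v"
    using assms unfolding connected_graph_def by blast
  then have "walk V E p" by (simp add: gpath_def)
  then have "\<exists>n p. walk V E p \<and> hd p = u \<and> last p = v \<and> length p = Suc n"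
    using p by (intro exI[of _ "length p - 1"] exI[of _ p]) (auto simp: walk_def)
  from LeastI_ex[OF this] zero obtain q where q: "hd q = u" "last q = v" "length q = Suc 0"
    unfolding gdist_def by auto
  then obtain x where "q = [x]" by (metis length_0_conv length_Suc_conv)
  with q assms(4) show False by simp
qed

lemma gdist_edge:
  assumes "simple_graph V E" "E u v"
  shows "gdist V E u v \<le> 1"
proof -
  have "walk V E [u, v]" using assms unfolding walk_def simple_graph_def
    by (auto simp: less_Suc_eq)
  then show ?thesis unfolding gdist_def
    by (intro Least_le[where k=1, simplified]) (rule exI[of _ "[u, v]"], simp)
qed

lemma gdist_set_eq_0:
  assumes "finite R" "x \<in> R" "x \<in> V"
  shows "gdist_set V E x R = 0"
proof -
  have "gdist_set V E x R \<le> gdist V E x x"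
    unfolding gdist_set_def using assms(1,2) by (intro Min_le) auto
  then show ?thesis using gdist_self[OF assms(3)] by simp
qed

lemma gdist_set_eq_1:
  assumes "simple_graph V E" "connected_graph V E"
    and "R \<subseteq> V" "x \<in> V" "x \<notin> R" "y \<in> R" "E x y"
  shows "gdist_set V E x R = 1"
proof -
  have "finite R" using assms(1,3) finite_subset by (auto simp: simple_graph_def)
  moreover have "\<forall>v\<in>R. 1 \<le> gdist V E x v"
    using gdist_pos[OF assms(2,4)] assms(3,5) by (metis One_nat_def Suc_leI in_mono)
  moreover have "gdist V E x y = 1"
    using gdist_edge[OF assms(1,7)] calculation(2) assms(6) by fastforce
  ultimately show ?thesis
    unfolding gdist_set_def using assms(6) by (intro Min_eqI) (auto intro: image_eqI[where x=y])
qed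

lemma rainbow_code_eq_if_twins:
  assumes "finite V" "w \<in> V" "z \<in> V" "c w = c z" "twins V E w z"
  shows "rainbow_code V E c k w = rainbow_code V E c k z"
  unfolding rainbow_code_def
proof (rule map_cong[OF refl])
  fix i
  have fin: "finite (color_class V c i)" using assms(1) by (simp add: color_class_def)
  show "gdist_set V E w (color_class V c i) = gdist_set V E z (color_class V c i)"
  proof (cases "i = c w")
    case True
    then have "w \<in> color_class V c i" "z \<in> color_class V c i"
      using assms(2-4) by (auto simp: color_class_def)
    then show ?thesis using gdist_set_eq_0 fin assms(2,3) by metis
  next
    case False
    then have "\<forall>y\<in>color_class V c i. gdist V E w y = gdist V E z y"
      using assms(4,5) by (auto simp: color_class_def twins_def)
    then show ?thesis unfolding gdist_set_def by (metis image_cong)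
  qed
qed

lemma locating_rainbow_coloring_inj_on_twins:
  assumes "finite V" "locating_rainbow_coloring V E c k" "A \<subseteq> V"
    and "\<forall>w\<in>A. \<forall>z\<in>A. w \<noteq> z \<longrightarrow> twins V E w z"
  shows "inj_on c A"
proof (rule inj_onI, rule ccontr)
  fix w z assume wz: "w \<in> A" "z \<in> A" "c w = c z" "w \<noteq> z"
  then have "rainbow_code V E c k w = rainbow_code V E c k z"
    using rainbow_code_eq_if_twins assms(1,3,4) by (metis subsetD)
  moreover have "inj_on (rainbow_code V E c k) V"
    using assms(2) by (simp add: locating_rainbow_coloring_def)
  ultimately show False using wz assms(3) by (metis inj_onD subsetD)
qed

lemma rainbow_code_clique:
  assumes "simple_graph V E" "connected_graph V E"
    and "X \<subseteq> V" "\<forall>w\<in>X. \<forall>z\<in>X. w \<noteq> z \<longrightarrow> E w z" "{1..k} \<subseteq> c ` X" "x \<in> X"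
  shows "rainbow_code V E c k x = map (\<lambda>j. if j = c x then 0 else 1) [1..<Suc k]"
  unfolding rainbow_code_def
proof (rule map_cong[OF refl])
  fix j assume "j \<in> set [1..<Suc k]"
  then have "j \<in> c ` X" using assms(5) by auto
  then obtain y where y: "y \<in> X" "c y = j" by blast
  have x: "x \<in> V" using assms(3,6) by blast
  have j_class: "color_class V c j \<subseteq> V" "y \<in> color_class V c j"
    using y assms(3) by (auto simp: color_class_def)
  show "gdist_set V E x (color_class V c j) = (if j = c x then 0 else 1)"
  proof (cases "j = c x")
    case True
    have "finite (color_class V c j)"
      using assms(1) by (simp add: simple_graph_def color_class_def)
    with x True show ?thesis by (simp add: gdist_set_eq_0 color_class_def)
  next
    case False
    then have "E x y" "x \<notin> color_class V c j"
      using assms(4,6) y by (auto simp: color_class_def)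
    then show ?thesis using gdist_set_eq_1[OF assms(1,2) j_class(1) x _ j_class(2)] False by simp
  qed
qed

text \<open>Colouring every vertex differently is locating, since each vertex is the only one at
  distance \<open>0\<close> from its own class; so \<^const>\<open>rvcl\<close> is the least element of a nonempty set.\<close>

lemma locating_rainbow_coloring_exists:
  assumes "simple_graph V E" "connected_graph V E"
  shows "\<exists>k c. locating_rainbow_coloring V E c k"
proof -
  have fin: "finite V" using assms by (simp add: simple_graph_def)
  obtain h where h: "bij_betw h V {0..<card V}" using ex_bij_betw_finite_nat[OF fin] by blast
  define c where "c x = Suc (h x)" for x
  have inj: "inj_on c V" using h by (auto simp: bij_betw_def inj_on_def c_def)
  have "c ` V = Suc ` (h ` V)" by (auto simp: c_def)
  then have img: "c ` V = {1..card V}"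
    using h by (simp add: bij_betw_def atLeastLessThanSuc_atLeastAtMost)
  have "rainbow_vertex_coloring V E c (card V)"
    unfolding rainbow_vertex_coloring_def
  proof (intro conjI img ballI)
    fix u v assume "u \<in> V" "v \<in> V"
    then obtain p where p: "gpath V E p" "hd p = u" "last p = v"
      using assms unfolding connected_graph_def by blast
    have "set (butlast (tl p)) \<subseteq> V" using p(1) unfolding gpath_def walk_def
      by (meson in_set_butlastD list.set_sel(2) subset_iff tl_Nil)
    then show "\<exists>p. gpath V E p \<and> hd p = u \<and> last p = v \<and> inj_on c (set (butlast (tl p)))"
      using p inj inj_on_subset by blast
  qed
  moreover have "inj_on (rainbow_code V E c (card V)) V"
  proof (rule inj_onI, rule ccontr)
    fix u v
    assume uv: "u \<in> V" "v \<in> V" "rainbow_code V E c (card V) u = rainbow_code V E c (card V) v"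
      and "u \<noteq> v"
    have v_class: "color_class V c (c v) = {v}"
      using inj uv(2) by (auto simp: color_class_def inj_on_def)
    have "c v \<in> {1..card V}" using img uv(2) by blast
    then have "c v \<in> set [1..<Suc (card V)]" by auto
    then have "gdist_set V E u {v} = gdist_set V E v {v}"
      using uv(3) v_class unfolding rainbow_code_def map_eq_conv by metis
    then have "gdist V E u v = 0" using gdist_self[OF uv(2)] by (simp add: gdist_set_def)
    then show False using gdist_pos[OF assms(2) uv(1,2) \<open>u \<noteq> v\<close>] by simp
  qed
  ultimately show ?thesis unfolding locating_rainbow_coloring_def by blast
qed

lemma image_eq_if_inj_on_card_le:
  assumes "inj_on f A" "f ` A \<subseteq> S" "finite S" "card S \<le> card A"
  shows "f ` A = S"
  using assms by (metis card_image card_mono card_subset_eq le_antisym)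

theorem lemma3:
  fixes V :: "'a set" and E :: "'a \<Rightarrow> 'a \<Rightarrow> bool" and A B :: "'a set" and t :: nat
  assumes "simple_graph V E" and "connected_graph V E"
    and "A \<subseteq> V" and "B \<subseteq> V" and "A \<inter> B = {}"
    and "card A = t" and "card B = t"
    and "\<forall>w\<in>A. \<forall>z\<in>A. w \<noteq> z \<longrightarrow> E w z"
    and "\<forall>w\<in>B. \<forall>z\<in>B. w \<noteq> z \<longrightarrow> E w z"
    and "\<forall>w\<in>A. \<forall>z\<in>A. w \<noteq> z \<longrightarrow> (\<forall>y\<in>V - {w, z}. gdist V E w y = gdist V E z y)"
    and "\<forall>w\<in>B. \<forall>z\<in>B. w \<noteq> z \<longrightarrow> (\<forall>y\<in>V - {w, z}. gdist V E w y = gdist V E z y)"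
  shows "rvcl V E \<ge> t + 1"
proof (rule ccontr)
  assume "\<not> rvcl V E \<ge> t + 1"
  then have k_le: "rvcl V E \<le> t" by simp
  obtain c where loc: "locating_rainbow_coloring V E c (rvcl V E)"
    using LeastI_ex[OF locating_rainbow_coloring_exists[OF assms(1,2)]] unfolding rvcl_def by blast
  have fin: "finite V" "V \<noteq> {}" using assms(1) by (auto simp: simple_graph_def)
  have img: "c ` V = {1..rvcl V E}"
    using loc by (simp add: locating_rainbow_coloring_def rainbow_vertex_coloring_def)
  have "inj_on c A" "inj_on c B"
    using locating_rainbow_coloring_inj_on_twins[OF fin(1) loc] assms(3,4,10,11)
    unfolding twins_def by blast+
  then have onto: "c ` A = {1..rvcl V E}" "c ` B = {1..rvcl V E}"
    using image_eq_if_inj_on_card_le img assms(3,4,6,7) k_le by (metis card_atLeastAtMost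
        diff_Suc_1 finite_atLeastAtMost image_mono)+
  have "1 \<in> c ` V" using img fin(2) by fastforce
  then obtain a b where ab: "a \<in> A" "b \<in> B" "c a = 1" "c b = 1"
    using img onto by (metis imageE)
  then have "rainbow_code V E c (rvcl V E) a = rainbow_code V E c (rvcl V E) b"
    using rainbow_code_clique[OF assms(1,2)] assms(3,4,8,9) onto by (metis order_refl)
  moreover have "inj_on (rainbow_code V E c (rvcl V E)) V"
    using loc by (simp add: locating_rainbow_coloring_def)
  ultimately show False using ab assms(3-5) by (metis IntI empty_iff inj_onD subsetD)
qed

end
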